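(* Let $\zeta_c\in\mathcal C$ be a simple critical point, with representative critical point $x_{*,c}$ and branch value $\lambda_c$. Then there exist a neighborhood $\mathcal O$ of $\zeta_c$ and unique $C^1$ maps $\zeta\mapsto x_*(\zeta)$, $\zeta\mapsto\lambda(\zeta)$ on $\mathcal O$ with $(x_*(\zeta_c),\lambda(\zeta_c))=(x_{*,c},\lambda_c)$ and $F(\lambda(\zeta),x_*(\zeta);\zeta)=\partial_yF(\lambda(\zeta),x_*(\zeta);\zeta)=0$. If in addition $x_*(\zeta)$ remains a representative of the unique dominant orbit for $\zeta\in\mathcal O$, then $\rho_*(\zeta)=|x_*(\zeta)|$ on $\mathcal O$, and $\rho_*$ is $C^1$ on $\mathcal O$.
   Context: Fix integers $N\ge1$ and $2\le s_1<\dots<s_N$; put $s=\gcd(s_1,\dots,s_N)$. For $\zeta\in\mathbb C^N$ set $F(y,x;\zeta)=y-1-\sum_{n=1}^N\zeta_n x^{s_n}y^{s_n}$. The Taylor branch $U(x;\zeta)$ is the unique germ analytic at $x=0$ with $U(0;\zeta)=1$ and $F(U(x;\zeta),x;\zeta)=0$; its analytic continuation along paths is called the chosen Taylor sheet. $\rho_*(\zeta)$ is the supremum of $\rho>0$ such that $U(\cdot;\zeta)$ extends analytically to $|x|<\rho$. Dominant regime: $\rho_*(\zeta)<\infty$ and the chosen Taylor sheet has exactly $s$ singular points on $|x|=\rho_*(\zeta)$, forming one orbit $\{e^{2\pi ij/s}x_*(\zeta)\}_{j=0}^{s-1}$. The branch value at a singular point $x_*$ is $\lambda=\lim_{x\to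 x_*}U(x;\zeta)$ along the sheet (finite). $\mathcal C$ is the set of $\zeta$ in the dominant regime with $\rho_*(\zeta)=1$. $\zeta_c\in\mathcal C$ is a simple critical point if for a representative $x_{*,c}$ with branch value $\lambda_c$: $F=\partial_yF=0$ and $\partial_y^2F\ne0$ at $(\lambda_c,x_{*,c};\zeta_c)$. *)

theory Defs
  imports "HOL-Analysis.Analysis"
begin

text \<open>Coefficient vectors zeta live in complex^'n (N = CARD('n)); the exponents
  are s :: 'n => nat (injective, all >= 2).\<close>

definition Fpoly :: "('n::finite \<Rightarrow> nat) \<Rightarrow> complex \<Rightarrow> complex \<Rightarrow> complex^'n \<Rightarrow> complex" where
  "Fpoly s y x \<zeta> = y - 1 - (\<Sum>n\<in>UNIV. \<zeta>$n * x ^ (s n) * y ^ (s n))"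

definition Fy :: "('n::finite \<Rightarrow> nat) \<Rightarrow> complex \<Rightarrow> complex \<Rightarrow> complex^'n \<Rightarrow> complex" where
  "Fy s y x \<zeta> = deriv (\<lambda>w. Fpoly s w x \<zeta>) y"

definition Fyy :: "('n::finite \<Rightarrow> nat) \<Rightarrow> complex \<Rightarrow> complex \<Rightarrow> complex^'n \<Rightarrow> complex" where
  "Fyy s y x \<zeta> = deriv (\<lambda>w. Fy s w x \<zeta>) y"

definition taylor_ext :: "('n::finite \<Rightarrow> nat) \<Rightarrow> complex^'n \<Rightarrow> real \<Rightarrow> (complex \<Rightarrow> complex) \<Rightarrow> bool" where
  "taylor_ext s \<zeta> R g \<longleftrightarrow> g holomorphic_on ball 0 R \<and> g 0 = 1 \<and>
     (\<forall>x\<in>ball 0 R. Fpoly s (g x) x \<zeta> = 0)"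

definition rho_star :: "('n::finite \<Rightarrow> nat) \<Rightarrow> complex^'n \<Rightarrow> ereal" where
  "rho_star s \<zeta> = Sup {ereal R | R. R > 0 \<and> (\<exists>g. taylor_ext s \<zeta> R g)}"

definition sheet_sing_pts :: "('n::finite \<Rightarrow> nat) \<Rightarrow> complex^'n \<Rightarrow> complex set" where
  "sheet_sing_pts s \<zeta> = (let \<rho> = real_of_ereal (rho_star s \<zeta>) in
     {x0. cmod x0 = \<rho> \<and>
       \<not> (\<exists>r>0. \<exists>h. h holomorphic_on (ball 0 \<rho> \<union> ball x0 r) \<and> h 0 = 1 \<and>
            (\<forall>x\<in>ball 0 \<rho> \<union> ball x0 r. Fpoly s (h x) x \<zeta> = 0))})"

definition sgcd :: "('n::finite \<Rightarrow> nat) \<Rightarrow> nat" where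
  "sgcd s = Gcd (range s)"

definition orbit :: "('n::finite \<Rightarrow> nat) \<Rightarrow> complex \<Rightarrow> complex set" where
  "orbit s x0 = {cis (2 * pi * real j / real (sgcd s)) * x0 | j. j < sgcd s}"

definition dominant :: "('n::finite \<Rightarrow> nat) \<Rightarrow> complex^'n \<Rightarrow> bool" where
  "dominant s \<zeta> \<longleftrightarrow> rho_star s \<zeta> < \<infinity> \<and> (\<exists>x0. sheet_sing_pts s \<zeta> = orbit s x0)"

definition branch_value :: "('n::finite \<Rightarrow> nat) \<Rightarrow> complex^'n \<Rightarrow> complex \<Rightarrow> complex \<Rightarrow> bool" where
  "branch_value s \<zeta> x0 lam \<longleftrightarrow> (let \<rho> = real_of_ereal (rho_star s \<zeta>) in
     \<exists>g. taylor_ext s \<zeta> \<rho> g \<and> (g \<longlongrightarrow> lam) (at x0 within ball 0 \<rho>))"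

definition critset :: "('n::finite \<Rightarrow> nat) \<Rightarrow> (complex^'n) set" where
  "critset s = {\<zeta>. dominant s \<zeta> \<and> rho_star s \<zeta> = 1}"

definition simple_critical :: "('n::finite \<Rightarrow> nat) \<Rightarrow> complex^'n \<Rightarrow> complex \<Rightarrow> complex \<Rightarrow> bool" where
  "simple_critical s \<zeta>c xc lc \<longleftrightarrow> \<zeta>c \<in> critset s \<and> xc \<in> sheet_sing_pts s \<zeta>c \<and>
     branch_value s \<zeta>c xc lc \<and> Fpoly s lc xc \<zeta>c = 0 \<and> Fy s lc xc \<zeta>c = 0 \<and> Fyy s lc xc \<zeta>c \<noteq> 0"

definition C1_on :: "'a::real_normed_vector set \<Rightarrow> ('a \<Rightarrow> 'b::real_normed_vector) \<Rightarrow> bool" where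
  "C1_on S f \<longleftrightarrow> (\<exists>f'. (\<forall>z\<in>S. (f has_derivative blinfun_apply (f' z)) (at z)) \<and> continuous_on S f')"

end

theory Submission
  imports Defs
begin

(* With u = x y one has F(y,x) = y - 1 - sum_n zeta_n u^(s_n), and
     y d_yF - F = H(zeta,u) := 1 - sum_n (s_n - 1) zeta_n u^(s_n),     y d_y^2F = x d_uH(zeta,u).
   As F(0,x) = -1, the system F = d_yF = 0 is equivalent to H(zeta, x y) = 0 together with
   y = 1 + sum_n zeta_n (x y)^(s_n), and at a simple critical point d_uH does not vanish.
   The implicit function theorem therefore yields a C^1 root u(zeta) of H near zeta_c, unique among
   continuous roots on connected neighbourhoods, and lambda = 1 + sum_n zeta_n u^(s_n), x_* = u / lambda
   are the required maps. A singular point lies on the circle |x| = rho_*, so rho_* = |x_*|, which is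
   C^1 because x_* does not vanish. *)

section \<open>C1 maps\<close>

lemma continuous_on_Blinfun:
  fixes D :: "'c::t2_space \<Rightarrow> 'a::euclidean_space \<Rightarrow> 'b::real_normed_vector"
  assumes "\<And>p. p \<in> S \<Longrightarrow> bounded_linear (D p)" and "\<And>h. continuous_on S (\<lambda>p. D p h)"
  shows "continuous_on S (\<lambda>p. Blinfun (D p))"
proof (rule continuous_on_blinfun_componentwise)
  fix h :: 'a
  show "continuous_on S (\<lambda>p. blinfun_apply (Blinfun (D p)) h)"
    using assms(2)[of h] by (rule continuous_on_eq) (simp add: bounded_linear_Blinfun_apply assms(1))
qed

lemma C1_onI:
  fixes f :: "'a::euclidean_space \<Rightarrow> 'b::real_normed_vector"
  assumes der: "\<And>z. z \<in> S \<Longrightarrow> (f has_derivative f' z) (at z)"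
    and cont: "\<And>h. continuous_on S (\<lambda>z. f' z h)"
  shows "C1_on S f"
  unfolding C1_on_def
proof (intro exI conjI ballI)
  have bl: "bounded_linear (f' z)" if "z \<in> S" for z
    using der[OF that] by (rule has_derivative_bounded_linear)
  show "(f has_derivative blinfun_apply (Blinfun (f' z))) (at z)" if "z \<in> S" for z
    using der[OF that] by (simp add: bounded_linear_Blinfun_apply bl[OF that])
  show "continuous_on S (\<lambda>z. Blinfun (f' z))"
    by (rule continuous_on_Blinfun[OF bl cont])
qed

lemma C1_on_imp_continuous_on: "C1_on S f \<Longrightarrow> continuous_on S f"
  unfolding C1_on_def by (meson continuous_at_imp_continuous_on has_derivative_continuous)

lemma C1_on_subset: "C1_on S f \<Longrightarrow> T \<subseteq> S \<Longrightarrow> C1_on T f"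
  unfolding C1_on_def by (blast intro: continuous_on_subset)

lemma C1_on_cong:
  assumes "open S" "\<And>z. z \<in> S \<Longrightarrow> f z = g z" "C1_on S f"
  shows "C1_on S g"
  using assms(3) has_derivative_transform_within_open[where f=f and g=g, OF _ assms(1) _ assms(2)]
  unfolding C1_on_def by blast

lemma C1_on_bounded_linear: "bounded_linear f \<Longrightarrow> C1_on S f"
  unfolding C1_on_def
  by (intro exI[of _ "\<lambda>z. Blinfun f"] conjI ballI continuous_on_const)
    (simp add: bounded_linear_Blinfun_apply bounded_linear_imp_has_derivative)

lemma C1_on_const: "C1_on S (\<lambda>z. c)"
  unfolding C1_on_def
  by (rule exI[of _ "\<lambda>z. 0"]) (simp add: zero_blinfun.rep_eq)

lemma C1_on_add:
  assumes "C1_on S f" "C1_on S g"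
  shows "C1_on S (\<lambda>z. f z + g z)"
proof -
  obtain f' g' where f: "\<And>z. z \<in> S \<Longrightarrow> (f has_derivative blinfun_apply (f' z)) (at z)" "continuous_on S f'"
    and g: "\<And>z. z \<in> S \<Longrightarrow> (g has_derivative blinfun_apply (g' z)) (at z)" "continuous_on S g'"
    using assms unfolding C1_on_def by blast
  show ?thesis unfolding C1_on_def
    by (rule exI[of _ "\<lambda>z. f' z + g' z"])
      (auto intro!: continuous_intros f g has_derivative_eq_rhs[OF has_derivative_add] simp: plus_blinfun.rep_eq)
qed

lemma C1_on_mult:
  fixes f g :: "'a::real_normed_vector \<Rightarrow> 'b::real_normed_algebra"
  assumes "C1_on S f" "C1_on S g"
  shows "C1_on S (\<lambda>z. f z * g z)"
proof -
  obtain f' g' where f: "\<And>z. z \<in> S \<Longrightarrow> (f has_derivative blinfun_apply (f' z)) (at z)" "continuous_on S f'"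
    and g: "\<And>z. z \<in> S \<Longrightarrow> (g has_derivative blinfun_apply (g' z)) (at z)" "continuous_on S g'"
    using assms unfolding C1_on_def by blast
  have "continuous_on S f" "continuous_on S g"
    using assms by (auto intro: C1_on_imp_continuous_on)
  then show ?thesis unfolding C1_on_def
    by (intro exI[of _ "\<lambda>z. (blinfun_mult_right (f z) o\<^sub>L g' z) + (blinfun_mult_left (g z) o\<^sub>L f' z)"])
      (auto intro!: continuous_intros f g has_derivative_eq_rhs[OF has_derivative_mult]
        simp: plus_blinfun.rep_eq)
qed

lemma C1_on_power:
  fixes f :: "'a::real_normed_vector \<Rightarrow> 'b::real_normed_algebra_1"
  assumes "C1_on S f"
  shows "C1_on S (\<lambda>z. f z ^ n)"
  by (induction n) (simp_all add: C1_on_const C1_on_mult assms)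

lemma C1_on_sum:
  assumes "\<And>i. i \<in> I \<Longrightarrow> C1_on S (f i)"
  shows "C1_on S (\<lambda>z. \<Sum>i\<in>I. f i z)"
  using assms by (induction I rule: infinite_finite_induct) (simp_all add: C1_on_const C1_on_add)

lemma C1_on_inverse:
  fixes f :: "'a::real_normed_vector \<Rightarrow> 'b::real_normed_div_algebra"
  assumes "C1_on S f" "\<And>z. z \<in> S \<Longrightarrow> f z \<noteq> 0"
  shows "C1_on S (\<lambda>z. inverse (f z))"
proof -
  obtain f' where f: "\<And>z. z \<in> S \<Longrightarrow> (f has_derivative blinfun_apply (f' z)) (at z)" "continuous_on S f'"
    using assms unfolding C1_on_def by blast
  have "continuous_on S f"
    using assms by (auto intro: C1_on_imp_continuous_on)
  then show ?thesis unfolding C1_on_def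
    by (intro exI[of _ "\<lambda>z. - (blinfun_mult_right (inverse (f z)) o\<^sub>L blinfun_mult_left (inverse (f z)) o\<^sub>L f' z)"])
      (auto intro!: continuous_intros f assms(2) has_derivative_eq_rhs[OF Deriv.has_derivative_inverse]
        simp: uminus_blinfun.rep_eq mult.assoc)
qed

lemma C1_on_divide:
  fixes f g :: "'a::real_normed_vector \<Rightarrow> 'b::real_normed_field"
  assumes "C1_on S f" "C1_on S g" "\<And>z. z \<in> S \<Longrightarrow> g z \<noteq> 0"
  shows "C1_on S (\<lambda>z. f z / g z)"
  using C1_on_mult[OF assms(1) C1_on_inverse[OF assms(2,3)]] by (simp add: divide_inverse)

lemma C1_on_norm:
  fixes f :: "'a::real_normed_vector \<Rightarrow> 'b::real_inner"
  assumes "C1_on S f" "\<And>z. z \<in> S \<Longrightarrow> f z \<noteq> 0"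
  shows "C1_on S (\<lambda>z. norm (f z))"
proof -
  obtain f' where f: "\<And>z. z \<in> S \<Longrightarrow> (f has_derivative blinfun_apply (f' z)) (at z)" "continuous_on S f'"
    using assms unfolding C1_on_def by blast
  have "continuous_on S f"
    using assms by (auto intro: C1_on_imp_continuous_on)
  then show ?thesis unfolding C1_on_def
    by (intro exI[of _ "\<lambda>z. blinfun_inner_left (sgn (f z)) o\<^sub>L f' z"])
      (auto intro!: continuous_intros f assms(2) has_derivative_eq_rhs[OF has_derivative_compose[OF _ has_derivative_norm]]
        simp: o_def)
qed


section \<open>An implicit function theorem with a complex fibre\<close>

lemma continuous_on_eq_on_connected:
  fixes f g :: "'a::topological_space \<Rightarrow> 'b::real_normed_vector"
  assumes "connected V" "continuous_on V f" "continuous_on V g" "a \<in> V" "f a = g a"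
    and "openin (top_of_set V) {z \<in> V. f z = g z}" "z \<in> V"
  shows "f z = g z"
proof -
  have "closedin (top_of_set V) {z \<in> V. f z = g z}"
    using continuous_closedin_preimage_constant[of V "\<lambda>z. f z - g z" 0] assms(2,3)
    by (simp add: continuous_on_diff)
  with assms have "{z \<in> V. f z = g z} = V"
    unfolding connected_clopen by blast
  with \<open>z \<in> V\<close> show ?thesis by blast
qed

lemma open_connected_nbhd_nonzero:
  fixes h :: "'a::real_normed_vector \<Rightarrow> 'b::real_normed_vector"
  assumes "open W" "continuous_on W h" "a \<in> W" "h a \<noteq> 0"
  obtains V where "open V" "connected V" "a \<in> V" "V \<subseteq> W" "\<And>z. z \<in> V \<Longrightarrow> h z \<noteq> 0"
proof -
  have "open (W \<inter> h -` (- {0}))" "a \<in> W \<inter> h -` (- {0})"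
    using continuous_open_preimage[OF assms(2,1), of "- {0}"] assms(3,4) by auto
  then obtain e where "e > 0" "ball a e \<subseteq> W \<inter> h -` (- {0})"
    by (meson openE)
  then show thesis
    by (intro that[of "ball a e"]) auto
qed

lemma implicit_derivative:
  fixes f :: "'a::real_normed_vector \<Rightarrow> complex \<Rightarrow> complex"
  assumes "open W" "z \<in> W" "\<And>w. w \<in> W \<Longrightarrow> f w (g w) = 0"
    and "g differentiable at z"
    and "((\<lambda>p. f (fst p) (snd p)) has_derivative (\<lambda>q. A (fst q) + B * snd q)) (at (z, g z))"
    and "B \<noteq> 0"
  shows "(g has_derivative (\<lambda>h. - A h / B)) (at z)"
proof -
  obtain g' where dg: "(g has_derivative g') (at z)"
    using assms(4) unfolding differentiable_def by blast
  have "((\<lambda>w. f w (g w)) has_derivative (\<lambda>h. A h + B * g' h)) (at z)"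
    using has_derivative_compose[OF has_derivative_Pair[OF has_derivative_ident dg] assms(5)]
    by (simp add: o_def)
  moreover have "((\<lambda>w. f w (g w)) has_derivative (\<lambda>h. 0)) (at z)"
    by (rule has_derivative_transform_within_open[OF has_derivative_const \<open>open W\<close> \<open>z \<in> W\<close>])
      (simp add: assms(3))
  ultimately have "(\<lambda>h. A h + B * g' h) = (\<lambda>h. 0)"
    by (rule has_derivative_unique)
  then have "g' = (\<lambda>h. - A h / B)"
    using \<open>B \<noteq> 0\<close> by (simp add: fun_eq_iff eq_neg_iff_add_eq_0 field_simps)
  with dg show ?thesis by simp
qed

lemma graph_map_local_inverse:
  fixes f :: "'a::euclidean_space \<times> complex \<Rightarrow> complex"
    and A :: "'a \<times> complex \<Rightarrow> 'a \<Rightarrow> complex" and B :: "'a \<times> complex \<Rightarrow> complex"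
  assumes "open S" "p0 \<in> S" "B p0 \<noteq> 0"
    and der: "\<And>p. p \<in> S \<Longrightarrow> (f has_derivative (\<lambda>q. A p (fst q) + B p * snd q)) (at p)"
    and contA: "\<And>h. continuous_on S (\<lambda>p. A p h)" and contB: "continuous_on S B"
  obtains U V G where "open U" "U \<subseteq> S" "p0 \<in> U" "open V" "(fst p0, f p0) \<in> V"
    "homeomorphism U V (\<lambda>p. (fst p, f p)) G" "\<And>y. y \<in> V \<Longrightarrow> G differentiable at y"
proof -
  define D where "D p = (\<lambda>q. (fst q, A p (fst q) + B p * snd q))" for p
  have blD: "bounded_linear (D p)" if "p \<in> S" for p
    unfolding D_def
    by (intro bounded_linear_Pair bounded_linear_fst has_derivative_bounded_linear[OF der[OF that]])
  have blA: "bounded_linear (A p)" if "p \<in> S" for p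
    using bounded_linear_compose[OF has_derivative_bounded_linear[OF der[OF that]], of "\<lambda>h. (h, 0)"]
    by (simp add: bounded_linear_Pair)
  have derD: "((\<lambda>p. (fst p, f p)) has_derivative blinfun_apply (Blinfun (D p))) (at p)" if "p \<in> S" for p
    unfolding bounded_linear_Blinfun_apply[OF blD[OF that]] unfolding D_def
    by (rule has_derivative_Pair[OF has_derivative_fst[OF has_derivative_ident] der[OF that]])
  have contD: "continuous_on S (\<lambda>p. Blinfun (D p))"
    by (rule continuous_on_Blinfun[OF blD]) (auto simp: D_def intro!: continuous_intros contA contB)
  define J where "J q = (fst q, (snd q - A p0 (fst q)) / B p0)" for q
  have "bounded_linear (\<lambda>q. snd q - A p0 (fst q))"
    by (intro bounded_linear_sub bounded_linear_snd bounded_linear_compose[OF blA[OF \<open>p0 \<in> S\<close>]]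
        bounded_linear_fst)
  then have "bounded_linear J"
    unfolding J_def by (intro bounded_linear_Pair bounded_linear_fst bounded_linear_compose[OF bounded_linear_divide])
  moreover have "J (D p0 q) = q" for q
    using \<open>B p0 \<noteq> 0\<close> by (simp add: J_def D_def)
  ultimately have "Blinfun J o\<^sub>L Blinfun (D p0) = id_blinfun"
    by (intro blinfun_eqI) (simp only: blinfun_apply_blinfun_compose blinfun_apply_id_blinfun
        bounded_linear_Blinfun_apply blD[OF \<open>p0 \<in> S\<close>])
  note ift = inverse_function_theorem[OF \<open>open S\<close> derD contD \<open>p0 \<in> S\<close> this]
  show ?thesis
  proof (rule ift)
    fix U V G G'
    assume "open U" "U \<subseteq> S" "p0 \<in> U" "open V" "(fst p0, f p0) \<in> V"
      "homeomorphism U V (\<lambda>p. (fst p, f p)) G" "\<And>y. y \<in> V \<Longrightarrow> (G has_derivative G' y) (at y)"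
    then show thesis
      by (intro that) (auto intro: differentiableI)
  qed
qed

lemma local_inverse_graph_section:
  fixes f :: "'a::real_normed_vector \<Rightarrow> 'b::real_normed_vector \<Rightarrow> 'b"
  assumes hom: "homeomorphism U V (\<lambda>p. (fst p, f (fst p) (snd p))) G"
    and "open V" "\<And>y. y \<in> V \<Longrightarrow> G differentiable at y" "(a, b) \<in> U" "f a b = 0"
  obtains W g where "open W" "a \<in> W" "g a = b" "\<And>z. z \<in> W \<Longrightarrow> (z, g z) \<in> U"
    "\<And>z. z \<in> W \<Longrightarrow> f z (g z) = 0" "\<And>z. z \<in> W \<Longrightarrow> g differentiable at z"
proof -
  have GV: "\<And>y. y \<in> V \<Longrightarrow> G y \<in> U \<and> (fst (G y), f (fst (G y)) (snd (G y))) = y"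
    and UG: "\<And>p. p \<in> U \<Longrightarrow> G (fst p, f (fst p) (snd p)) = p \<and> (fst p, f (fst p) (snd p)) \<in> V"
    using hom unfolding homeomorphism_def by auto
  define W where "W = (\<lambda>z. (z, 0)) -` V"
  define g where "g z = snd (G (z, 0))" for z
  have "open W"
    unfolding W_def by (rule continuous_open_vimage[OF \<open>open V\<close>]) (intro continuous_intros)
  have "a \<in> W" "g a = b"
    using UG[OF \<open>(a, b) \<in> U\<close>] \<open>f a b = 0\<close> by (simp_all add: W_def g_def)
  have graph: "G (z, 0) = (z, g z)" "(z, g z) \<in> U" "f z (g z) = 0" if "z \<in> W" for z
  proof -
    have "G (z, 0) \<in> U" "fst (G (z, 0)) = z" "f z (g z) = 0"
      using GV[of "(z, 0)"] that unfolding W_def g_def by auto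
    moreover from this(2) have "G (z, 0) = (z, g z)"
      by (simp add: g_def prod_eq_iff)
    ultimately show "G (z, 0) = (z, g z)" "(z, g z) \<in> U" "f z (g z) = 0"
      by simp_all
  qed
  have "g differentiable at z" if "z \<in> W" for z
  proof -
    have "((\<lambda>z. (z, 0)) has_derivative (\<lambda>h. (h, 0))) (at z)"
      by (intro has_derivative_Pair has_derivative_ident has_derivative_const)
    moreover have "(z, 0) \<in> V"
      using that by (simp add: W_def)
    then obtain G' where "(G has_derivative G') (at (z, 0))"
      using assms(3) unfolding differentiable_def by blast
    ultimately have "(g has_derivative (\<lambda>h. snd (G' (h, 0)))) (at z)"
      unfolding g_def by (intro has_derivative_snd) (rule has_derivative_compose)
    then show ?thesis
      by (rule differentiableI)
  qed
  with \<open>open W\<close> \<open>a \<in> W\<close> \<open>g a = b\<close> graph(2,3) show thesis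
    by (rule that)
qed

lemma implicit_function_C1:
  fixes f :: "'a::euclidean_space \<Rightarrow> complex \<Rightarrow> complex"
  assumes "open W" "\<And>z. z \<in> W \<Longrightarrow> g differentiable at z"
    and "\<And>z. z \<in> W \<Longrightarrow> f z (g z) = 0" "\<And>z. z \<in> W \<Longrightarrow> (z, g z) \<in> S"
    and der: "\<And>p. p \<in> S \<Longrightarrow> ((\<lambda>p. f (fst p) (snd p)) has_derivative (\<lambda>q. A p (fst q) + B p * snd q)) (at p)"
    and contA: "\<And>h. continuous_on S (\<lambda>p. A p h)" and contB: "continuous_on S B"
    and "\<And>p. p \<in> S \<Longrightarrow> B p \<noteq> 0"
  shows "C1_on W g"
proof -
  have dg: "(g has_derivative (\<lambda>h. - A (z, g z) h / B (z, g z))) (at z)" if "z \<in> W" for z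
    using assms(2-4,8) that by (intro implicit_derivative[OF \<open>open W\<close> that _ _ der]) auto
  then have "continuous_on W g"
    by (blast intro: continuous_at_imp_continuous_on has_derivative_continuous)
  then have "continuous_on W (\<lambda>z. (z, g z))"
    by (intro continuous_intros)
  moreover have "(\<lambda>z. (z, g z)) ` W \<subseteq> S"
    using assms(4) by auto
  ultimately have "continuous_on W (\<lambda>z. A (z, g z) h)" "continuous_on W (\<lambda>z. B (z, g z))" for h
    by (auto intro: continuous_on_compose2[OF contA] continuous_on_compose2[OF contB])
  then show ?thesis
    using assms(4,8) by (intro C1_onI[OF dg]) (auto intro!: continuous_intros)
qed

lemma implicit_function_unique:
  fixes f :: "'a::topological_space \<Rightarrow> 'b::real_normed_vector \<Rightarrow> 'c::zero"
  assumes "inj_on (\<lambda>p. (fst p, f (fst p) (snd p))) U" "open U"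
    and "connected T" "continuous_on T g" "continuous_on T g'" "a \<in> T" "g' a = g a"
    and "\<And>z. z \<in> T \<Longrightarrow> (z, g z) \<in> U" "\<And>z. z \<in> T \<Longrightarrow> f z (g z) = 0" "\<And>z. z \<in> T \<Longrightarrow> f z (g' z) = 0"
    and "z \<in> T"
  shows "g' z = g z"
proof (rule continuous_on_eq_on_connected[OF assms(3,5,4,6,7) _ \<open>z \<in> T\<close>])
  have "{z \<in> T. g' z = g z} = T \<inter> (\<lambda>z. (z, g' z)) -` U"
  proof (intro set_eqI iffI)
    fix w assume w: "w \<in> T \<inter> (\<lambda>z. (z, g' z)) -` U"
    then have "(w, f w (g' w)) = (w, f w (g w))"
      using assms(9,10) by simp
    then show "w \<in> {z \<in> T. g' z = g z}"
      using inj_onD[OF assms(1), of "(w, g' w)" "(w, g w)"] w assms(8) by auto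
  qed (use assms(8) in auto)
  also have "openin (top_of_set T) \<dots>"
    by (rule continuous_openin_preimage_gen[OF _ \<open>open U\<close>]) (intro continuous_intros assms(5))
  finally show "openin (top_of_set T) {z \<in> T. g' z = g z}" .
qed

lemma implicit_function_theorem:
  fixes f :: "'a::euclidean_space \<Rightarrow> complex \<Rightarrow> complex"
    and A :: "'a \<times> complex \<Rightarrow> 'a \<Rightarrow> complex" and B :: "'a \<times> complex \<Rightarrow> complex"
  assumes "open S" "(a, b) \<in> S" "f a b = 0" "B (a, b) \<noteq> 0"
    and der: "\<And>p. p \<in> S \<Longrightarrow> ((\<lambda>p. f (fst p) (snd p)) has_derivative (\<lambda>q. A p (fst q) + B p * snd q)) (at p)"
    and contA: "\<And>h. continuous_on S (\<lambda>p. A p h)" and contB: "continuous_on S B"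
  obtains W g where "open W" "a \<in> W" "g a = b" "C1_on W g" "\<And>z. z \<in> W \<Longrightarrow> f z (g z) = 0"
    "\<And>V g' z. V \<subseteq> W \<Longrightarrow> connected V \<Longrightarrow> a \<in> V \<Longrightarrow> continuous_on V g' \<Longrightarrow> g' a = b \<Longrightarrow>
       (\<And>z. z \<in> V \<Longrightarrow> f z (g' z) = 0) \<Longrightarrow> z \<in> V \<Longrightarrow> g' z = g z"
proof -
  \<comment> \<open>Restricting to where B does not vanish makes the fibre derivative invertible all along the
    graph, not only at (a, b).\<close>
  define S0 where "S0 = S \<inter> B -` (- {0})"
  have "open S0" "(a, b) \<in> S0"
    using continuous_open_preimage[OF contB \<open>open S\<close>, of "- {0}"] assms(2,4) by (auto simp: S0_def)
  have der0: "\<And>p. p \<in> S0 \<Longrightarrow> ((\<lambda>p. f (fst p) (snd p)) has_derivative (\<lambda>q. A p (fst q) + B p * snd q)) (at p)"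
    and contA0: "\<And>h. continuous_on S0 (\<lambda>p. A p h)" and contB0: "continuous_on S0 B"
    using der contA contB by (auto simp: S0_def intro: continuous_on_subset)
  from graph_map_local_inverse[OF \<open>open S0\<close> \<open>(a, b) \<in> S0\<close> \<open>B (a, b) \<noteq> 0\<close> der0 contA0 contB0]
  obtain U V G where "open U" "U \<subseteq> S0" "(a, b) \<in> U" "open V"
    and "(fst (a, b), f (fst (a, b)) (snd (a, b))) \<in> V"
    and hom: "homeomorphism U V (\<lambda>p. (fst p, f (fst p) (snd p))) G" and dG: "\<And>y. y \<in> V \<Longrightarrow> G differentiable at y"
    by blast
  from local_inverse_graph_section[OF hom \<open>open V\<close> dG \<open>(a, b) \<in> U\<close> \<open>f a b = 0\<close>]
  obtain W g where "open W" "a \<in> W" "g a = b" and graph: "\<And>z. z \<in> W \<Longrightarrow> (z, g z) \<in> U"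
    and root: "\<And>z. z \<in> W \<Longrightarrow> f z (g z) = 0" and dg: "\<And>z. z \<in> W \<Longrightarrow> g differentiable at z"
    by blast
  have "C1_on W g"
  proof (rule implicit_function_C1[OF \<open>open W\<close> dg root _ der0 contA0 contB0])
    show "(z, g z) \<in> S0" if "z \<in> W" for z
      using graph[OF that] \<open>U \<subseteq> S0\<close> by blast
    show "B p \<noteq> 0" if "p \<in> S0" for p
      using that by (simp add: S0_def)
  qed
  have "\<And>p. p \<in> U \<Longrightarrow> G (fst p, f (fst p) (snd p)) = p"
    using hom unfolding homeomorphism_def by auto
  then have "inj_on (\<lambda>p. (fst p, f (fst p) (snd p))) U"
    by (rule inj_on_inverseI)
  show ?thesis
  proof (rule that[OF \<open>open W\<close> \<open>a \<in> W\<close> \<open>g a = b\<close> \<open>C1_on W g\<close> root])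
    fix V g' z
    assume "V \<subseteq> W" "connected V" "a \<in> V" "continuous_on V g'" "g' a = b"
      and g'_root: "\<And>z. z \<in> V \<Longrightarrow> f z (g' z) = 0" and "z \<in> V"
    have "continuous_on V g"
      using C1_on_imp_continuous_on[OF \<open>C1_on W g\<close>] \<open>V \<subseteq> W\<close> by (rule continuous_on_subset)
    then show "g' z = g z"
    proof (rule implicit_function_unique[OF \<open>inj_on _ U\<close> \<open>open U\<close> \<open>connected V\<close> _
          \<open>continuous_on V g'\<close> \<open>a \<in> V\<close>])
      show "g' a = g a"
        using \<open>g' a = b\<close> \<open>g a = b\<close> by simp
    qed (use graph root \<open>V \<subseteq> W\<close> g'_root \<open>z \<in> V\<close> in auto)
  qed
qed


section \<open>The critical curve\<close>

(* crit_poly and crit_poly_deriv are H and d_uH of the proof idea above. *)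
definition crit_poly :: "('n::finite \<Rightarrow> nat) \<Rightarrow> complex^'n \<Rightarrow> complex \<Rightarrow> complex" where
  "crit_poly s \<zeta> u = 1 - (\<Sum>n\<in>UNIV. \<zeta>$n * of_nat (s n - 1) * u ^ s n)"

definition crit_poly_deriv :: "('n::finite \<Rightarrow> nat) \<Rightarrow> complex^'n \<Rightarrow> complex \<Rightarrow> complex" where
  "crit_poly_deriv s \<zeta> u = - (\<Sum>n\<in>UNIV. \<zeta>$n * of_nat (s n - 1) * of_nat (s n) * u ^ (s n - 1))"

lemma Fpoly_eq_xy: "Fpoly s y x \<zeta> = y - 1 - (\<Sum>n\<in>UNIV. \<zeta>$n * (x * y) ^ s n)"
  unfolding Fpoly_def by (simp add: power_mult_distrib mult.assoc)

lemma Fpoly_0_left: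
  assumes "\<forall>n. 0 < s n"
  shows "Fpoly s 0 x \<zeta> = -1"
  using assms unfolding Fpoly_def by (simp add: power_0_left less_not_refl2)

lemma Fpoly_root_nonzero:
  assumes "\<forall>n. 0 < s n" "Fpoly s y x \<zeta> = 0"
  shows "y \<noteq> 0"
  using assms Fpoly_0_left[OF assms(1)] by force

lemma Fy_eq: "Fy s y x \<zeta> = 1 - (\<Sum>n\<in>UNIV. \<zeta>$n * x ^ s n * (of_nat (s n) * y ^ (s n - 1)))"
  unfolding Fy_def Fpoly_def
  by (rule DERIV_imp_deriv) (rule derivative_eq_intros refl | simp add: mult_ac)+

lemma Fyy_eq:
  "Fyy s y x \<zeta> = - (\<Sum>n\<in>UNIV. \<zeta>$n * x ^ s n * (of_nat (s n) * (of_nat (s n - 1) * y ^ (s n - 1 - 1))))"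
  unfolding Fyy_def Fy_eq
  by (rule DERIV_imp_deriv) (rule derivative_eq_intros refl | simp add: mult_ac)+

lemma crit_poly_xy_eq:
  assumes "\<forall>n. 0 < s n"
  shows "crit_poly s \<zeta> (x * y) = y * Fy s y x \<zeta> - Fpoly s y x \<zeta>"
proof -
  have "\<zeta>$n * of_nat (s n - 1) * (x * y) ^ s n =
      y * (\<zeta>$n * x ^ s n * (of_nat (s n) * y ^ (s n - 1))) - \<zeta>$n * (x * y) ^ s n" for n
    using assms[rule_format, of n] by (cases "s n") (simp_all add: algebra_simps)
  then have "crit_poly s \<zeta> (x * y) =
      1 - (\<Sum>n\<in>UNIV. y * (\<zeta>$n * x ^ s n * (of_nat (s n) * y ^ (s n - 1))) - \<zeta>$n * (x * y) ^ s n)"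
    by (simp add: crit_poly_def)
  also have "\<dots> = y * Fy s y x \<zeta> - Fpoly s y x \<zeta>"
    unfolding Fy_eq Fpoly_eq_xy by (simp add: sum_subtractf sum_distrib_left algebra_simps)
  finally show ?thesis .
qed

lemma mult_Fyy_eq_crit_poly_deriv: "y * Fyy s y x \<zeta> = x * crit_poly_deriv s \<zeta> (x * y)"
proof -
  have termwise: "y * (\<zeta>$n * x ^ s n * (of_nat (s n) * (of_nat (s n - 1) * y ^ (s n - 1 - 1)))) =
      x * (\<zeta>$n * of_nat (s n - 1) * of_nat (s n) * (x * y) ^ (s n - 1))" for n
  proof (cases "s n")
    case (Suc k)
    then show ?thesis by (cases k) (simp_all add: algebra_simps)
  qed simp
  have "y * Fyy s y x \<zeta> =
      - (\<Sum>n\<in>UNIV. y * (\<zeta>$n * x ^ s n * (of_nat (s n) * (of_nat (s n - 1) * y ^ (s n - 1 - 1)))))"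
    unfolding Fyy_eq by (simp add: sum_distrib_left)
  also have "\<dots> = - (\<Sum>n\<in>UNIV. x * (\<zeta>$n * of_nat (s n - 1) * of_nat (s n) * (x * y) ^ (s n - 1)))"
    by (simp only: termwise)
  also have "\<dots> = x * crit_poly_deriv s \<zeta> (x * y)"
    unfolding crit_poly_deriv_def by (simp add: sum_distrib_left)
  finally show ?thesis .
qed

lemma Fpoly_Fy_eq_0_iff:
  assumes "\<forall>n. 0 < s n"
  shows "Fpoly s y x \<zeta> = 0 \<and> Fy s y x \<zeta> = 0 \<longleftrightarrow>
    y = 1 + (\<Sum>n\<in>UNIV. \<zeta>$n * (x * y) ^ s n) \<and> crit_poly s \<zeta> (x * y) = 0"
proof
  assume "Fpoly s y x \<zeta> = 0 \<and> Fy s y x \<zeta> = 0"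
  then show "y = 1 + (\<Sum>n\<in>UNIV. \<zeta>$n * (x * y) ^ s n) \<and> crit_poly s \<zeta> (x * y) = 0"
    using crit_poly_xy_eq[OF assms, of \<zeta> x y] by (simp add: Fpoly_eq_xy diff_diff_eq)
next
  assume *: "y = 1 + (\<Sum>n\<in>UNIV. \<zeta>$n * (x * y) ^ s n) \<and> crit_poly s \<zeta> (x * y) = 0"
  then have F: "Fpoly s y x \<zeta> = 0"
    by (simp add: Fpoly_eq_xy diff_diff_eq)
  moreover have "y \<noteq> 0"
    using F by (rule Fpoly_root_nonzero[OF assms])
  ultimately show "Fpoly s y x \<zeta> = 0 \<and> Fy s y x \<zeta> = 0"
    using * crit_poly_xy_eq[OF assms, of \<zeta> x y] by simp
qed

lemma crit_poly_has_derivative: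
  "((\<lambda>p. crit_poly s (fst p) (snd p)) has_derivative
     (\<lambda>q. - (\<Sum>n\<in>UNIV. fst q $ n * of_nat (s n - 1) * snd p ^ s n) +
          crit_poly_deriv s (fst p) (snd p) * snd q)) (at p)"
  unfolding crit_poly_def crit_poly_deriv_def
  by (rule has_derivative_eq_rhs,
      (rule derivative_eq_intros bounded_linear.has_derivative[OF bounded_linear_vec_nth] refl | simp)+)
    (simp add: fun_eq_iff sum_negf[symmetric] sum.distrib[symmetric] sum_distrib_left
      sum_distrib_right algebra_simps)

lemma crit_poly_implicit_root:
  fixes s :: "'n::finite \<Rightarrow> nat"
  assumes "crit_poly s \<zeta>0 u0 = 0" "crit_poly_deriv s \<zeta>0 u0 \<noteq> 0"
  obtains W u where "open W" "\<zeta>0 \<in> W" "u \<zeta>0 = u0" "C1_on W u"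
    "\<And>\<zeta>. \<zeta> \<in> W \<Longrightarrow> crit_poly s \<zeta> (u \<zeta>) = 0"
    "\<And>V u' \<zeta>. V \<subseteq> W \<Longrightarrow> connected V \<Longrightarrow> \<zeta>0 \<in> V \<Longrightarrow> continuous_on V u' \<Longrightarrow> u' \<zeta>0 = u0 \<Longrightarrow>
       (\<And>\<zeta>. \<zeta> \<in> V \<Longrightarrow> crit_poly s \<zeta> (u' \<zeta>) = 0) \<Longrightarrow> \<zeta> \<in> V \<Longrightarrow> u' \<zeta> = u \<zeta>"
proof -
  have "crit_poly_deriv s (fst (\<zeta>0, u0)) (snd (\<zeta>0, u0)) \<noteq> 0"
    using assms(2) by simp
  moreover have "continuous_on UNIV (\<lambda>p::(complex^'n) \<times> complex.
      - (\<Sum>n\<in>UNIV. h $ n * of_nat (s n - 1) * snd p ^ s n))" for h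
    by (intro continuous_intros)
  moreover have "continuous_on UNIV (\<lambda>p::(complex^'n) \<times> complex. crit_poly_deriv s (fst p) (snd p))"
    unfolding crit_poly_deriv_def by (intro continuous_intros)
  ultimately show thesis
    by (rule implicit_function_theorem[OF open_UNIV UNIV_I assms(1) _ crit_poly_has_derivative])
      (fact that)
qed

lemma crit_poly_root_at_critical:
  assumes s_pos: "\<forall>n. 0 < s n"
    and "Fpoly s y x \<zeta> = 0" "Fy s y x \<zeta> = 0" "Fyy s y x \<zeta> \<noteq> 0"
  shows "crit_poly s \<zeta> (x * y) = 0" "crit_poly_deriv s \<zeta> (x * y) \<noteq> 0"
proof -
  show "crit_poly s \<zeta> (x * y) = 0"
    using assms Fpoly_Fy_eq_0_iff[OF s_pos] by blast
  have "y * Fyy s y x \<zeta> \<noteq> 0"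
    using assms Fpoly_root_nonzero[OF s_pos] by simp
  then show "crit_poly_deriv s \<zeta> (x * y) \<noteq> 0"
    by (simp add: mult_Fyy_eq_crit_poly_deriv)
qed

lemma critical_pair_eqI:
  assumes s_pos: "\<forall>n. 0 < s n"
    and "Fpoly s y x \<zeta> = 0 \<and> Fy s y x \<zeta> = 0" "Fpoly s y' x' \<zeta> = 0 \<and> Fy s y' x' \<zeta> = 0"
    and "x * y = x' * y'"
  shows "x = x' \<and> y = y'"
proof -
  have "y = 1 + (\<Sum>n\<in>UNIV. \<zeta>$n * (x * y) ^ s n)" "y' = 1 + (\<Sum>n\<in>UNIV. \<zeta>$n * (x' * y') ^ s n)"
    using assms(2,3) Fpoly_Fy_eq_0_iff[OF s_pos] by blast+
  then have "y = y'"
    using \<open>x * y = x' * y'\<close> by simp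
  moreover have "y \<noteq> 0"
    using assms Fpoly_root_nonzero[OF s_pos] by blast
  ultimately show ?thesis
    using \<open>x * y = x' * y'\<close> by simp
qed

lemma critical_curve:
  fixes s :: "'n::finite \<Rightarrow> nat"
  assumes s_pos: "\<forall>n. 0 < s n"
    and crit: "Fpoly s lc xc \<zeta>c = 0" "Fy s lc xc \<zeta>c = 0" "Fyy s lc xc \<zeta>c \<noteq> 0" and "xc \<noteq> 0"
  obtains V xs lam where "open V" "\<zeta>c \<in> V" "C1_on V xs" "C1_on V lam" "xs \<zeta>c = xc" "lam \<zeta>c = lc"
    "\<And>\<zeta>. \<zeta> \<in> V \<Longrightarrow> Fpoly s (lam \<zeta>) (xs \<zeta>) \<zeta> = 0 \<and> Fy s (lam \<zeta>) (xs \<zeta>) \<zeta> = 0"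
    "\<And>\<zeta>. \<zeta> \<in> V \<Longrightarrow> xs \<zeta> \<noteq> 0"
    "\<And>xs' lam' \<zeta>. continuous_on V xs' \<Longrightarrow> continuous_on V lam' \<Longrightarrow> xs' \<zeta>c = xc \<Longrightarrow> lam' \<zeta>c = lc \<Longrightarrow>
       (\<And>\<zeta>. \<zeta> \<in> V \<Longrightarrow> Fpoly s (lam' \<zeta>) (xs' \<zeta>) \<zeta> = 0 \<and> Fy s (lam' \<zeta>) (xs' \<zeta>) \<zeta> = 0) \<Longrightarrow>
       \<zeta> \<in> V \<Longrightarrow> xs' \<zeta> = xs \<zeta> \<and> lam' \<zeta> = lam \<zeta>"
proof -
  from crit_poly_implicit_root[OF crit_poly_root_at_critical[OF s_pos crit]]
  obtain W u where "open W" "\<zeta>c \<in> W" "u \<zeta>c = xc * lc" "C1_on W u"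
    and u_root: "\<And>\<zeta>. \<zeta> \<in> W \<Longrightarrow> crit_poly s \<zeta> (u \<zeta>) = 0"
    and u_unique: "\<And>V u' \<zeta>. V \<subseteq> W \<Longrightarrow> connected V \<Longrightarrow> \<zeta>c \<in> V \<Longrightarrow> continuous_on V u' \<Longrightarrow>
      u' \<zeta>c = xc * lc \<Longrightarrow> (\<And>\<zeta>. \<zeta> \<in> V \<Longrightarrow> crit_poly s \<zeta> (u' \<zeta>) = 0) \<Longrightarrow> \<zeta> \<in> V \<Longrightarrow> u' \<zeta> = u \<zeta>"
    by blast
  define lam where "lam \<zeta> = 1 + (\<Sum>n\<in>UNIV. \<zeta>$n * u \<zeta> ^ s n)" for \<zeta>
  have "C1_on W lam"
    unfolding lam_def
    by (intro C1_on_add C1_on_const C1_on_sum C1_on_mult C1_on_power \<open>C1_on W u\<close>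
        C1_on_bounded_linear bounded_linear_vec_nth)
  have "lc = 1 + (\<Sum>n\<in>UNIV. \<zeta>c$n * (xc * lc) ^ s n)"
    using crit Fpoly_Fy_eq_0_iff[OF s_pos] by blast
  then have "lam \<zeta>c = lc"
    by (simp add: lam_def \<open>u \<zeta>c = xc * lc\<close>)
  have "lc \<noteq> 0"
    using crit(1) by (rule Fpoly_root_nonzero[OF s_pos])
  have "continuous_on W (\<lambda>\<zeta>. lam \<zeta> * u \<zeta>)"
    using \<open>C1_on W lam\<close> \<open>C1_on W u\<close> by (intro continuous_intros C1_on_imp_continuous_on)
  moreover have "lam \<zeta>c * u \<zeta>c \<noteq> 0"
    using \<open>lam \<zeta>c = lc\<close> \<open>lc \<noteq> 0\<close> \<open>u \<zeta>c = xc * lc\<close> \<open>xc \<noteq> 0\<close> by simp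
  ultimately obtain V where "open V" "connected V" "\<zeta>c \<in> V" "V \<subseteq> W"
    and lam_u_nz: "\<And>\<zeta>. \<zeta> \<in> V \<Longrightarrow> lam \<zeta> * u \<zeta> \<noteq> 0"
    using open_connected_nbhd_nonzero[OF \<open>open W\<close> _ \<open>\<zeta>c \<in> W\<close>] by blast
  then have lam_nz: "\<And>\<zeta>. \<zeta> \<in> V \<Longrightarrow> lam \<zeta> \<noteq> 0" and u_nz: "\<And>\<zeta>. \<zeta> \<in> V \<Longrightarrow> u \<zeta> \<noteq> 0"
    by auto
  define xs where "xs \<zeta> = u \<zeta> / lam \<zeta>" for \<zeta>
  have xs_lam: "xs \<zeta> * lam \<zeta> = u \<zeta>" if "\<zeta> \<in> V" for \<zeta>
    using lam_nz[OF that] by (simp add: xs_def)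
  have curve: "Fpoly s (lam \<zeta>) (xs \<zeta>) \<zeta> = 0 \<and> Fy s (lam \<zeta>) (xs \<zeta>) \<zeta> = 0" if "\<zeta> \<in> V" for \<zeta>
    using Fpoly_Fy_eq_0_iff[OF s_pos] xs_lam[OF that] u_root \<open>V \<subseteq> W\<close> that by (auto simp: lam_def)
  show thesis
  proof (rule that[of V xs lam, OF \<open>open V\<close> \<open>\<zeta>c \<in> V\<close> _ _ _ \<open>lam \<zeta>c = lc\<close> curve])
    show "C1_on V lam" "C1_on V xs"
      unfolding xs_def using lam_nz \<open>V \<subseteq> W\<close>
      by (auto intro!: C1_on_divide C1_on_subset[OF \<open>C1_on W u\<close>] C1_on_subset[OF \<open>C1_on W lam\<close>])
    show "xs \<zeta>c = xc"
      using \<open>lam \<zeta>c = lc\<close> \<open>u \<zeta>c = xc * lc\<close> \<open>lc \<noteq> 0\<close> by (simp add: xs_def)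
    show "xs \<zeta> \<noteq> 0" if "\<zeta> \<in> V" for \<zeta>
      using lam_nz[OF that] u_nz[OF that] by (simp add: xs_def)
  next
    fix xs' lam' \<zeta>
    assume "continuous_on V xs'" "continuous_on V lam'" "xs' \<zeta>c = xc" "lam' \<zeta>c = lc" "\<zeta> \<in> V"
      and curve': "\<And>\<zeta>. \<zeta> \<in> V \<Longrightarrow> Fpoly s (lam' \<zeta>) (xs' \<zeta>) \<zeta> = 0 \<and> Fy s (lam' \<zeta>) (xs' \<zeta>) \<zeta> = 0"
    have "xs' \<zeta> * lam' \<zeta> = u \<zeta>"
      using curve' Fpoly_Fy_eq_0_iff[OF s_pos] \<open>continuous_on V xs'\<close> \<open>continuous_on V lam'\<close>
        \<open>xs' \<zeta>c = xc\<close> \<open>lam' \<zeta>c = lc\<close>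
      by (intro u_unique[OF \<open>V \<subseteq> W\<close> \<open>connected V\<close> \<open>\<zeta>c \<in> V\<close> _ _ _ \<open>\<zeta> \<in> V\<close>])
        (auto intro: continuous_intros)
    then show "xs' \<zeta> = xs \<zeta> \<and> lam' \<zeta> = lam \<zeta>"
      using critical_pair_eqI[OF s_pos curve'[OF \<open>\<zeta> \<in> V\<close>] curve[OF \<open>\<zeta> \<in> V\<close>]]
        xs_lam[OF \<open>\<zeta> \<in> V\<close>] by simp
  qed
qed

lemma rho_star_eq_norm_sheet_sing_pt:
  assumes "x \<in> sheet_sing_pts s \<zeta>" "x \<noteq> 0"
  shows "rho_star s \<zeta> = ereal (cmod x)"
proof -
  have "cmod x = real_of_ereal (rho_star s \<zeta>)"
    using assms(1) by (simp add: sheet_sing_pts_def Let_def)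
  \<comment> \<open>real_of_ereal sends both infinities to 0, which x \<noteq> 0 excludes.\<close>
  with \<open>x \<noteq> 0\<close> show ?thesis
    by (cases "rho_star s \<zeta>") auto
qed

theorem lemma3p7:
  fixes s :: "'n::finite \<Rightarrow> nat" and \<zeta>c :: "complex^'n" and xc lc :: complex
  assumes "inj s" and "\<forall>n. 2 \<le> s n" and "simple_critical s \<zeta>c xc lc"
  shows "\<exists>V. open V \<and> \<zeta>c \<in> V \<and>
    (\<exists>xs lam. C1_on V xs \<and> C1_on V lam \<and> xs \<zeta>c = xc \<and> lam \<zeta>c = lc \<and>
      (\<forall>\<zeta>\<in>V. Fpoly s (lam \<zeta>) (xs \<zeta>) \<zeta> = 0 \<and> Fy s (lam \<zeta>) (xs \<zeta>) \<zeta> = 0) \<and>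
      (\<forall>xs' lam'. C1_on V xs' \<and> C1_on V lam' \<and> xs' \<zeta>c = xc \<and> lam' \<zeta>c = lc \<and>
          (\<forall>\<zeta>\<in>V. Fpoly s (lam' \<zeta>) (xs' \<zeta>) \<zeta> = 0 \<and> Fy s (lam' \<zeta>) (xs' \<zeta>) \<zeta> = 0)
        \<longrightarrow> (\<forall>\<zeta>\<in>V. xs' \<zeta> = xs \<zeta> \<and> lam' \<zeta> = lam \<zeta>)) \<and>
      ((\<forall>\<zeta>\<in>V. dominant s \<zeta> \<and> xs \<zeta> \<in> sheet_sing_pts s \<zeta>) \<longrightarrow>
         (\<forall>\<zeta>\<in>V. rho_star s \<zeta> = ereal (cmod (xs \<zeta>))) \<and>
         C1_on V (\<lambda>\<zeta>. real_of_ereal (rho_star s \<zeta>))))"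
proof -
  have s_pos: "\<forall>n. 0 < s n"
    using assms(2) by (auto intro: less_le_trans[of 0 2])
  from assms(3) have crit: "Fpoly s lc xc \<zeta>c = 0" "Fy s lc xc \<zeta>c = 0" "Fyy s lc xc \<zeta>c \<noteq> 0"
    and "xc \<in> sheet_sing_pts s \<zeta>c" "rho_star s \<zeta>c = 1"
    by (auto simp: simple_critical_def critset_def)
  then have "xc \<noteq> 0"
    by (auto simp: sheet_sing_pts_def one_ereal_def)
  obtain V xs lam where "open V" "\<zeta>c \<in> V" "C1_on V xs" "C1_on V lam" "xs \<zeta>c = xc" "lam \<zeta>c = lc"
    and curve: "\<And>\<zeta>. \<zeta> \<in> V \<Longrightarrow> Fpoly s (lam \<zeta>) (xs \<zeta>) \<zeta> = 0 \<and> Fy s (lam \<zeta>) (xs \<zeta>) \<zeta> = 0"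
    and xs_nz: "\<And>\<zeta>. \<zeta> \<in> V \<Longrightarrow> xs \<zeta> \<noteq> 0"
    and unique: "\<And>xs' lam' \<zeta>. continuous_on V xs' \<Longrightarrow> continuous_on V lam' \<Longrightarrow> xs' \<zeta>c = xc \<Longrightarrow>
      lam' \<zeta>c = lc \<Longrightarrow> (\<And>\<zeta>. \<zeta> \<in> V \<Longrightarrow> Fpoly s (lam' \<zeta>) (xs' \<zeta>) \<zeta> = 0 \<and> Fy s (lam' \<zeta>) (xs' \<zeta>) \<zeta> = 0) \<Longrightarrow>
      \<zeta> \<in> V \<Longrightarrow> xs' \<zeta> = xs \<zeta> \<and> lam' \<zeta> = lam \<zeta>"
    using critical_curve[OF s_pos crit \<open>xc \<noteq> 0\<close>] by blast
  show ?thesis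
  proof (intro exI conjI ballI allI impI)
    fix xs' lam' \<zeta>
    assume "C1_on V xs' \<and> C1_on V lam' \<and> xs' \<zeta>c = xc \<and> lam' \<zeta>c = lc \<and>
      (\<forall>\<zeta>\<in>V. Fpoly s (lam' \<zeta>) (xs' \<zeta>) \<zeta> = 0 \<and> Fy s (lam' \<zeta>) (xs' \<zeta>) \<zeta> = 0)" "\<zeta> \<in> V"
    then show "xs' \<zeta> = xs \<zeta>" "lam' \<zeta> = lam \<zeta>"
      using unique[of xs' lam' \<zeta>] C1_on_imp_continuous_on by blast+
  next
    assume "\<forall>\<zeta>\<in>V. dominant s \<zeta> \<and> xs \<zeta> \<in> sheet_sing_pts s \<zeta>"
    then have rho: "rho_star s \<zeta> = ereal (cmod (xs \<zeta>))" if "\<zeta> \<in> V" for \<zeta>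
      using rho_star_eq_norm_sheet_sing_pt xs_nz that by blast
    then show "rho_star s \<zeta> = ereal (cmod (xs \<zeta>))" if "\<zeta> \<in> V" for \<zeta>
      using that .
    show "C1_on V (\<lambda>\<zeta>. real_of_ereal (rho_star s \<zeta>))"
      by (rule C1_on_cong[OF \<open>open V\<close> _ C1_on_norm[OF \<open>C1_on V xs\<close> xs_nz]]) (simp add: rho)
  qed (use \<open>open V\<close> \<open>\<zeta>c \<in> V\<close> \<open>C1_on V xs\<close> \<open>C1_on V lam\<close> \<open>xs \<zeta>c = xc\<close> \<open>lam \<zeta>c = lc\<close> curve in auto)
qed

end
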